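(* In the biased planner's myopic problem described in the context, for every $b\in(p,1]$, $\pi^0_B(b)=p$.
   Context: A binary state $\omega\in\{G,B\}$; for an agent with public belief $b$ and private signal precision $q\in[0.5,1]$ (signal matches $\omega$ with probability $q$), the action is the signal if $1-q\le b\le q$, $G$ if $b>q$, $B$ if $b<1-q$. Let $z(b,q)=b+q-2bq$. The biased planner has baseline precision $p\in[0.5,1)$, cost $\beta:[0,1]\to[0,\infty)$ non-negative, increasing, continuous, concave with $\beta(0)=0$, and $C>0$; its instantaneous reward is $r_B(b,q)=-\beta(|q-p|)-Cz(b,q)$ if $q\ge\max(b,1-b)$, $-\beta(|q-p|)-C$ if $b<1-q$, and $-\beta(|q-p|)$ if $b>q$. The myopic optimal precision $\pi^0_B(b)$ is a maximizer of $q\mapsto r_B(b,q)$ over $[0.5,1]$. *)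

theory Defs
  imports "HOL-Analysis.Analysis"
begin

definition zfun :: "real \<Rightarrow> real \<Rightarrow> real" where
  "zfun b q = b + q - 2 * b * q"

definition rB :: "(real \<Rightarrow> real) \<Rightarrow> real \<Rightarrow> real \<Rightarrow> real \<Rightarrow> real \<Rightarrow> real" where
  "rB \<beta> C p b q =
     (if q \<ge> max b (1 - b) then - \<beta> \<bar>q - p\<bar> - C * zfun b q
      else if b < 1 - q then - \<beta> \<bar>q - p\<bar> - C
      else - \<beta> \<bar>q - p\<bar>)"

definition myopic_opt :: "(real \<Rightarrow> real) \<Rightarrow> real \<Rightarrow> real \<Rightarrow> real \<Rightarrow> real \<Rightarrow> bool" where
  "myopic_opt \<beta> C p b q \<longleftrightarrow>
     q \<in> {1/2..1} \<and> (\<forall>q'\<in>{1/2..1}. rB \<beta> C p b q' \<le> rB \<beta> C p b q)"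

end

theory Submission
  imports Defs
begin

text \<open>Since b > p \<ge> 1 - p, at q = p the belief lies above the precision and the agent ignores
  the signal, so the planner pays neither error cost nor precision cost. Any other q earns at most
  minus its precision cost, which is strictly positive because \<beta> is strictly increasing with
  \<beta> 0 = 0.\<close>

lemma zfun_nonneg:
  assumes "b \<in> {0..1}" "q \<in> {0..1}"
  shows "zfun b q \<ge> 0"
proof -
  have "zfun b q = b * (1 - q) + q * (1 - b)"
    by (simp add: zfun_def algebra_simps)
  also have "\<dots> \<ge> 0"
    using assms by (intro add_nonneg_nonneg mult_nonneg_nonneg) auto
  finally show ?thesis .
qed

lemma rB_le_neg_cost:
  assumes "C \<ge> 0" "b \<in> {0..1}" "q \<in> {0..1}"
  shows "rB \<beta> C p b q \<le> - \<beta> \<bar>q - p\<bar>"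
  using assms zfun_nonneg[of b q] by (auto simp: rB_def)

lemma rB_baseline_herding:
  assumes "1/2 \<le> p" "p < b" "\<beta> 0 = 0"
  shows "rB \<beta> C p b p = 0"
  using assms by (simp add: rB_def)

theorem lemma12:
  fixes \<beta> :: "real \<Rightarrow> real" and C p b :: real
  assumes p: "1/2 \<le> p" "p < 1"
    and nonneg: "\<forall>x\<in>{0..1}. \<beta> x \<ge> 0"
    and incr: "strict_mono_on {0..1} \<beta>"
    and cont: "continuous_on {0..1} \<beta>"
    and conc: "concave_on {0..1} \<beta>"
    and b0: "\<beta> 0 = 0"
    and C: "C > 0"
    and b: "p < b" "b \<le> 1"
  shows "myopic_opt \<beta> C p b p \<and> (\<forall>q. myopic_opt \<beta> C p b q \<longrightarrow> q = p)"
proof -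
  have reward_p: "rB \<beta> C p b p = 0"
    using rB_baseline_herding p b b0 by blast
  have reward_le: "rB \<beta> C p b q \<le> - \<beta> \<bar>q - p\<bar>" if "q \<in> {1/2..1}" for q
    using rB_le_neg_cost C p b that by auto
  have cost_pos: "\<beta> \<bar>q - p\<bar> > 0" if "q \<in> {1/2..1}" "q \<noteq> p" for q
    using strict_mono_onD[OF incr, of 0 "\<bar>q - p\<bar>"] b0 p that by auto
  have "myopic_opt \<beta> C p b p"
    unfolding myopic_opt_def
  proof (intro conjI ballI)
    show "p \<in> {1/2..1}" using p by auto
    fix q :: real assume q: "q \<in> {1/2..1}"
    have "\<beta> \<bar>q - p\<bar> \<ge> 0" using nonneg q p by auto
    then show "rB \<beta> C p b q \<le> rB \<beta> C p b p"
      using reward_le[OF q] reward_p by linarith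
  qed
  moreover have "q = p" if "myopic_opt \<beta> C p b q" for q
  proof (rule ccontr)
    assume "q \<noteq> p"
    from that have "q \<in> {1/2..1}" and "rB \<beta> C p b p \<le> rB \<beta> C p b q"
      unfolding myopic_opt_def using p by auto
    then show False
      using reward_le cost_pos reward_p \<open>q \<noteq> p\<close> by (smt (verit))
  qed
  ultimately show ?thesis by blast
qed

end
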